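(* Assume the activation and data assumptions below, and that Conditions 1 and 2 hold for the metric $G$. Let $0<\eta\alpha<2$. Then for sufficiently large $M$, with high probability, for all $t\ge0$, $$\|g(\theta_t)\|_2\le\Big(|1-\eta\alpha|+\tfrac{A'}{\sqrt M}\Big)^tR_0,\qquad \sum_{j=1}^t\|\theta_j-\theta_{j-1}\|_2\le AR_0\sum_{j=1}^t\Big(|1-\eta\alpha|+\tfrac{A'}{\sqrt M}\Big)^{j-1}\le\frac{2AR_0}{1-|1-\eta\alpha|},$$ where $A'=4KA^2R_0/(1-|1-\eta\alpha|)$.
   Context: Network: for $l=1,\dots,L$, $u_l=\frac{\sigma_w}{\sqrt{M_{l-1}}}W_lh_{l-1}+\sigma_b b_l$, $h_l=\phi(u_l)$, $h_0=x\in\mathbb{R}^{M_0}$; hidden widths $M_l=\alpha_lM$ ($\alpha_l>0$, $l<L$), $M_L=C$; output $f_\theta=u_L$; $\theta\in\mathbb{R}^P$ all parameters; initialization $\theta_0$ with all entries i.i.d. $\mathcal{N}(0,1)$. Assumption on activation: $\phi$ locally Lipschitz and non-polynomial, $\phi'$ locally Lipschitz. Assumption on data: training inputs $x_1,\dots,x_N$ with $\|x_n\|_2=1$ and $x_n\ne x_{n'}$ for $n\neq n'$; labels $y\in\mathbb{R}^{CN}$; loss $\mathcal{L}(\theta)=\frac1{2N}\|y-f_\theta(x)\|^2$ where $f_\theta(x)\in\mathbb{R}^{CN}$ concatenates outputs on training inputs. $J(\theta)=\nabla_\theta f_\theta(x)$ ($CN\times P$), $J_t=J(\theta_t)$; $g(\theta):=f_\theta(x)-y$.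 $G(\theta)$ is a $P\times P$ metric matrix (an approximate Fisher information computed on the training inputs), $G_t=G(\theta_t)$, and NGD is $\theta_{t+1}=\theta_t-\eta G_t^{-1}\nabla_\theta\mathcal{L}(\theta_t)$ (inverses taken in the zero-damping sense). $B(\theta_0,D)=\{\theta:\|\theta-\theta_0\|_2<D\}$; $\bar\eta=\eta/N$; $\|\cdot\|_2$ on matrices is the spectral norm. $K>0$ is a constant such that for large $M$ and every $D>0$, with high probability $\|J(\theta)\|_F\le K$ and $\|J(\theta)-J(\tilde\theta)\|_F\le K\|\theta-\tilde\theta\|_2/\sqrt M$ for all $\theta,\tilde\theta\in B(\theta_0,D)$ (such a constant exists under these assumptions). $R_0>0$ is a constant with $\|g(\theta_0)\|_2<R_0$ with high probability. Condition 1 (isotropic condition): at initialization $J_0G_0^{-1}J_0^\top/N=\alpha I$ for a constant $\alpha>0$. Condition 2: there is $A>0$ such that for large $M$ and every $D>0$, with high probability, $\bar\eta\|G(\theta_s)^{-1}J(\theta_s)^\top\|_2\le A$ and $\bar\eta\|G_0^{-1}J_0^\top-G(\theta_s)^{-1}J(\theta_s)^\top\|_2\le A\|\theta_s-\theta_0\|_2/\sqrt M$ for all $\theta_s\in B(\theta_0,D)$. "With high probability" means with probability tending to $1$ as $M\to\infty$. *)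

theory Defs
  imports "HOL-Analysis.Analysis" "HOL-Probability.Probability"
    "HOL-Computational_Algebra.Polynomial"
begin

(* Parameter indices: weight entry (W_l)_{ij} and bias entry (b_l)_i. *)
datatype pidx = Wi nat nat nat | Bi nat nat

definition vnorm :: "'i set \<Rightarrow> ('i \<Rightarrow> real) \<Rightarrow> real" where
  "vnorm I v = sqrt (\<Sum>i\<in>I. (v i)\<^sup>2)"

definition mvmul :: "'j set \<Rightarrow> ('i \<Rightarrow> 'j \<Rightarrow> real) \<Rightarrow> ('j \<Rightarrow> real) \<Rightarrow> 'i \<Rightarrow> real" where
  "mvmul J A v = (\<lambda>i. \<Sum>j\<in>J. A i j * v j)"

definition frob :: "'i set \<Rightarrow> 'j set \<Rightarrow> ('i \<Rightarrow> 'j \<Rightarrow> real) \<Rightarrow> real" where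
  "frob I J A = sqrt (\<Sum>i\<in>I. \<Sum>j\<in>J. (A i j)\<^sup>2)"

definition opnorm :: "'i set \<Rightarrow> 'j set \<Rightarrow> ('i \<Rightarrow> 'j \<Rightarrow> real) \<Rightarrow> real" where
  "opnorm I J A = Sup {vnorm I (mvmul J A v) | v. vnorm J v \<le> 1}"

definition locally_lipschitz :: "(real \<Rightarrow> real) \<Rightarrow> bool" where
  "locally_lipschitz f \<longleftrightarrow> (\<forall>x. \<exists>e>0. \<exists>C. C-lipschitz_on (ball x e) f)"

definition activation_ok :: "(real \<Rightarrow> real) \<Rightarrow> bool" where
  "activation_ok \<phi> \<longleftrightarrow>
     locally_lipschitz \<phi> \<and>
     \<not> (\<exists>p :: real poly. \<forall>x. \<phi> x = poly p x) \<and>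
     (\<forall>x. \<phi> differentiable at x) \<and>
     locally_lipschitz (deriv \<phi>)"

definition width :: "nat \<Rightarrow> nat \<Rightarrow> nat \<Rightarrow> (nat \<Rightarrow> real) \<Rightarrow> nat \<Rightarrow> nat \<Rightarrow> nat" where
  "width M0 C L \<alpha> M l =
     (if l = 0 then M0 else if l < L then nat \<lceil>\<alpha> l * real M\<rceil> else C)"

definition params :: "nat \<Rightarrow> (nat \<Rightarrow> nat) \<Rightarrow> pidx set" where
  "params L w =
     {Wi l i j | l i j. 1 \<le> l \<and> l \<le> L \<and> i < w l \<and> j < w (l - 1)}
     \<union> {Bi l i | l i. 1 \<le> l \<and> l \<le> L \<and> i < w l}"

definition preact :: "(real \<Rightarrow> real) \<Rightarrow> real \<Rightarrow> real \<Rightarrow> (nat \<Rightarrow> nat) \<Rightarrow>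
    (pidx \<Rightarrow> real) \<Rightarrow> nat \<Rightarrow> (nat \<Rightarrow> real) \<Rightarrow> nat \<Rightarrow> real" where
  "preact \<phi> \<sigma>w \<sigma>b w \<theta> l h i =
     \<sigma>w / sqrt (real (w (l - 1))) * (\<Sum>j<w (l - 1). \<theta> (Wi l i j) * h j) + \<sigma>b * \<theta> (Bi l i)"

fun hidden :: "(real \<Rightarrow> real) \<Rightarrow> real \<Rightarrow> real \<Rightarrow> (nat \<Rightarrow> nat) \<Rightarrow>
    (pidx \<Rightarrow> real) \<Rightarrow> (nat \<Rightarrow> real) \<Rightarrow> nat \<Rightarrow> nat \<Rightarrow> real" where
  "hidden \<phi> \<sigma>w \<sigma>b w \<theta> x 0 = x"
| "hidden \<phi> \<sigma>w \<sigma>b w \<theta> x (Suc l) =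
     (\<lambda>i. \<phi> (preact \<phi> \<sigma>w \<sigma>b w \<theta> (Suc l) (hidden \<phi> \<sigma>w \<sigma>b w \<theta> x l) i))"

definition netout :: "(real \<Rightarrow> real) \<Rightarrow> real \<Rightarrow> real \<Rightarrow> (nat \<Rightarrow> nat) \<Rightarrow> nat \<Rightarrow>
    (pidx \<Rightarrow> real) \<Rightarrow> (nat \<Rightarrow> real) \<Rightarrow> nat \<Rightarrow> real" where
  "netout \<phi> \<sigma>w \<sigma>b w L \<theta> x =
     preact \<phi> \<sigma>w \<sigma>b w \<theta> L (hidden \<phi> \<sigma>w \<sigma>b w \<theta> x (L - 1))"

definition outs :: "nat \<Rightarrow> nat \<Rightarrow> (nat \<times> nat) set" where
  "outs N C = {..<N} \<times> {..<C}"

definition fvec :: "(real \<Rightarrow> real) \<Rightarrow> real \<Rightarrow> real \<Rightarrow> (nat \<Rightarrow> nat) \<Rightarrow> nat \<Rightarrow>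
    (nat \<Rightarrow> nat \<Rightarrow> real) \<Rightarrow> (pidx \<Rightarrow> real) \<Rightarrow> nat \<times> nat \<Rightarrow> real" where
  "fvec \<phi> \<sigma>w \<sigma>b w L xs \<theta> = (\<lambda>(n, c). netout \<phi> \<sigma>w \<sigma>b w L \<theta> (xs n) c)"

definition jac :: "((pidx \<Rightarrow> real) \<Rightarrow> 'k \<Rightarrow> real) \<Rightarrow> (pidx \<Rightarrow> real) \<Rightarrow> 'k \<Rightarrow> pidx \<Rightarrow> real" where
  "jac F \<theta> k p = deriv (\<lambda>s. F (\<theta>(p := s)) k) (\<theta> p)"

(* (G + rho I)^{-1} J^T for rho > 0: the unique P x CN matrix X (zero outside the index sets)
   with (G + rho I) X = J^T *)
definition damped_solve :: "pidx set \<Rightarrow> 'k set \<Rightarrow> (pidx \<Rightarrow> pidx \<Rightarrow> real) \<Rightarrow>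
    ('k \<Rightarrow> pidx \<Rightarrow> real) \<Rightarrow> real \<Rightarrow> pidx \<Rightarrow> 'k \<Rightarrow> real" where
  "damped_solve PI OI G J \<rho> = (THE X.
      (\<forall>p k. (p \<notin> PI \<or> k \<notin> OI) \<longrightarrow> X p k = 0) \<and>
      (\<forall>p\<in>PI. \<forall>k\<in>OI. (\<Sum>q\<in>PI. (G p q + (if p = q then \<rho> else 0)) * X q k) = J k p))"

(* G^{-1} J^T in the zero-damping sense: lim_{rho -> 0+} (G + rho I)^{-1} J^T *)
definition ginvJT :: "pidx set \<Rightarrow> 'k set \<Rightarrow> (pidx \<Rightarrow> pidx \<Rightarrow> real) \<Rightarrow>
    ('k \<Rightarrow> pidx \<Rightarrow> real) \<Rightarrow> pidx \<Rightarrow> 'k \<Rightarrow> real" where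
  "ginvJT PI OI G J = (\<lambda>p k. Lim (at_right 0) (\<lambda>\<rho>. damped_solve PI OI G J \<rho> p k))"

(* NGD iterates: theta_{t+1} = theta_t - eta G_t^{-1} grad L(theta_t),
   with grad L(theta) = J(theta)^T g(theta) / N *)
primrec ngd :: "pidx set \<Rightarrow> 'k set \<Rightarrow> nat \<Rightarrow> real \<Rightarrow> ((pidx \<Rightarrow> real) \<Rightarrow> 'k \<Rightarrow> real) \<Rightarrow>
    ((pidx \<Rightarrow> real) \<Rightarrow> 'k \<Rightarrow> real) \<Rightarrow> ((pidx \<Rightarrow> real) \<Rightarrow> pidx \<Rightarrow> pidx \<Rightarrow> real) \<Rightarrow>
    (pidx \<Rightarrow> real) \<Rightarrow> nat \<Rightarrow> pidx \<Rightarrow> real" where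
  "ngd PI OI N \<eta> F g G \<theta>0 0 = \<theta>0"
| "ngd PI OI N \<eta> F g G \<theta>0 (Suc t) =
     (let \<theta> = ngd PI OI N \<eta> F g G \<theta>0 t in
      (\<lambda>p. \<theta> p - \<eta> * (\<Sum>k\<in>OI. ginvJT PI OI (G \<theta>) (jac F \<theta>) p k * g \<theta> k) / real N))"

definition whp :: "(nat \<Rightarrow> (pidx \<Rightarrow> real) measure) \<Rightarrow> (nat \<Rightarrow> (pidx \<Rightarrow> real) \<Rightarrow> bool) \<Rightarrow> bool" where
  "whp \<mu> P \<longleftrightarrow> (\<exists>E. (\<forall>M. E M \<in> sets (\<mu> M)) \<and>
       ((\<lambda>M. measure (\<mu> M) (E M)) \<longlonglongrightarrow> 1) \<and>
       (\<forall>\<^sub>F M in sequentially. \<forall>\<theta>0\<in>E M. P M \<theta>0))"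

definition init_law :: "pidx set \<Rightarrow> (pidx \<Rightarrow> real) measure" where
  "init_law PI = PiM PI (\<lambda>_. density lborel std_normal_density)"

end

theory Submission
  imports Defs
begin

(* Write d_t = \<theta>_(t+1) - \<theta>_t = -(\<eta>/N) Q_t g_t with Q = G^-1 J^T. The isotropic condition
   J_0 Q_0 = N \<alpha> I turns g_t + J_0 d_t into (1 - \<eta>\<alpha>) g_t up to the error J_0 (\<eta>/N) (Q_0 - Q_t) g_t,
   and the mean value theorem bounds g_(t+1) - g_t - J_0 d_t by (J(\<xi>) - J_0) d_t for some \<xi> on
   the segment. The Lipschitz bounds on J and on \<eta>Q/N make both errors at most K A D0/sqrt M |g_t|
   while the iterates stay in the ball of radius D0 = 2 A R0 / (1 - |1 - \<eta>\<alpha>|) around \<theta>_0, so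
   |g_t| decays at the rate \<rho> = |1 - \<eta>\<alpha>| + A'/sqrt M. Once \<rho> <= (1 + |1 - \<eta>\<alpha>|)/2, which holds
   for large M, the path length sum_j |d_j| <= A R0 sum_j \<rho>^(j-1) stays below D0, so by induction
   the iterates never leave the ball. The hypotheses on the activation and the data only serve to
   guarantee the constant K; the argument itself uses just the differentiability of \<phi>. *)

section \<open>Euclidean norms on finite index sets\<close>

lemma vnorm_eq_L2_set: "vnorm I v = L2_set v I"
  by (simp add: vnorm_def L2_set_def)

lemma vnorm_nonneg: "0 \<le> vnorm I v"
  by (simp add: vnorm_eq_L2_set)

lemma vnorm_cong: "(\<And>i. i \<in> I \<Longrightarrow> a i = b i) \<Longrightarrow> vnorm I a = vnorm I b"
  unfolding vnorm_def by simp

lemma vnorm_add_le: "vnorm I (\<lambda>i. a i + b i) \<le> vnorm I a + vnorm I b"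
  unfolding vnorm_eq_L2_set by (rule L2_set_triangle_ineq)

lemma vnorm_mult: "vnorm I (\<lambda>i. c * a i) = \<bar>c\<bar> * vnorm I a"
  unfolding vnorm_def
  by (simp add: power_mult_distrib sum_distrib_left[symmetric] real_sqrt_mult)

lemma vnorm_power2: "(vnorm I v)\<^sup>2 = (\<Sum>i\<in>I. v i * v i)"
  unfolding vnorm_def by (simp add: sum_nonneg power2_eq_square)

lemma abs_sum_mult_le_vnorm: "\<bar>\<Sum>i\<in>I. a i * b i\<bar> \<le> vnorm I a * vnorm I b"
proof -
  have "\<bar>\<Sum>i\<in>I. a i * b i\<bar> \<le> (\<Sum>i\<in>I. \<bar>a i\<bar> * \<bar>b i\<bar>)"
    unfolding abs_mult[symmetric] by (rule sum_abs)
  also have "\<dots> \<le> vnorm I a * vnorm I b"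
    unfolding vnorm_eq_L2_set by (rule L2_set_mult_ineq)
  finally show ?thesis .
qed

lemma frob_eq_L2_set: "frob I J A = L2_set (\<lambda>i. vnorm J (A i)) I"
  unfolding frob_def L2_set_def vnorm_def by (simp add: sum_nonneg)

lemma frob_nonneg: "0 \<le> frob I J A"
  by (simp add: frob_def sum_nonneg)

lemma vnorm_mvmul_le_frob: "vnorm I (mvmul J A v) \<le> frob I J A * vnorm J v"
proof -
  have "vnorm I (mvmul J A v) = L2_set (\<lambda>i. \<bar>mvmul J A v i\<bar>) I"
    by (simp add: vnorm_def L2_set_def)
  also have "\<dots> \<le> L2_set (\<lambda>i. vnorm J (A i) * vnorm J v) I"
    using abs_sum_mult_le_vnorm[where I=J] by (intro L2_set_mono) (auto simp: mvmul_def)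
  also have "\<dots> = frob I J A * vnorm J v"
    by (simp add: frob_eq_L2_set L2_set_left_distrib vnorm_nonneg)
  finally show ?thesis .
qed

lemma vnorm_mvmul_le_opnorm:
  assumes "finite J"
  shows "vnorm I (mvmul J A v) \<le> opnorm I J A * vnorm J v"
proof -
  have bdd: "bdd_above {vnorm I (mvmul J A u) | u. vnorm J u \<le> 1}"
  proof (rule bdd_aboveI, safe)
    fix u :: "'a \<Rightarrow> real" assume "vnorm J u \<le> 1"
    then show "vnorm I (mvmul J A u) \<le> frob I J A"
      using vnorm_mvmul_le_frob[of I J A u] frob_nonneg[of I J A]
      by (smt (verit) mult_left_le)
  qed
  show ?thesis
  proof (cases "vnorm J v = 0")
    case True
    then have "mvmul J A v = (\<lambda>i. 0)"
      using assms by (simp add: vnorm_eq_L2_set L2_set_eq_0_iff mvmul_def)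
    then show ?thesis using True by (simp add: vnorm_def)
  next
    case False
    then have n: "vnorm J v > 0" using vnorm_nonneg[of J v] by linarith
    have "vnorm J (\<lambda>j. (1 / vnorm J v) * v j) = \<bar>1 / vnorm J v\<bar> * vnorm J v"
      by (rule vnorm_mult)
    also have "\<dots> = 1" using n by simp
    finally have unit: "vnorm J (\<lambda>j. (1 / vnorm J v) * v j) = 1" .
    have "vnorm I (mvmul J A v) / vnorm J v = vnorm I (\<lambda>i. (1 / vnorm J v) * mvmul J A v i)"
      using n by (subst vnorm_mult) simp
    also have "\<dots> = vnorm I (mvmul J A (\<lambda>j. (1 / vnorm J v) * v j))"
      by (simp add: mvmul_def sum_distrib_left mult_ac)
    also have "\<dots> \<le> opnorm I J A"
      unfolding opnorm_def using bdd unit by (intro cSup_upper) auto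
    finally show ?thesis
      using n by (simp add: field_simps)
  qed
qed

section \<open>Events of high probability\<close>

lemma prob_space_init_law: "prob_space (init_law PI)"
  unfolding init_law_def by (auto intro!: prob_space_PiM prob_space_normal_density)

lemma whp_conjI:
  assumes prob: "\<And>M. prob_space (\<mu> M)" and "whp \<mu> P" and "whp \<mu> Q"
  shows "whp \<mu> (\<lambda>M \<theta>. P M \<theta> \<and> Q M \<theta>)"
proof -
  obtain E1 where E1: "\<forall>M. E1 M \<in> sets (\<mu> M)" "(\<lambda>M. measure (\<mu> M) (E1 M)) \<longlonglongrightarrow> 1"
    "\<forall>\<^sub>F M in sequentially. \<forall>\<theta>\<in>E1 M. P M \<theta>"
    using assms(2) unfolding whp_def by blast
  obtain E2 where E2: "\<forall>M. E2 M \<in> sets (\<mu> M)" "(\<lambda>M. measure (\<mu> M) (E2 M)) \<longlonglongrightarrow> 1"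
    "\<forall>\<^sub>F M in sequentially. \<forall>\<theta>\<in>E2 M. Q M \<theta>"
    using assms(3) unfolding whp_def by blast
  have lower: "measure (\<mu> M) (E1 M) + measure (\<mu> M) (E2 M) - 1 \<le> measure (\<mu> M) (E1 M \<inter> E2 M)"
    and upper: "measure (\<mu> M) (E1 M \<inter> E2 M) \<le> 1" for M
  proof -
    interpret prob_space "\<mu> M" by (rule prob)
    have "measure (\<mu> M) (E1 M \<union> E2 M)
        = measure (\<mu> M) (E1 M) + measure (\<mu> M) (E2 M) - measure (\<mu> M) (E1 M \<inter> E2 M)"
      using E1(1) E2(1) by (intro measure_Un3) (simp_all add: fmeasurable_eq_sets)
    then show "measure (\<mu> M) (E1 M) + measure (\<mu> M) (E2 M) - 1 \<le> measure (\<mu> M) (E1 M \<inter> E2 M)"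
      using prob_le_1[of "E1 M \<union> E2 M"] by linarith
    show "measure (\<mu> M) (E1 M \<inter> E2 M) \<le> 1" by (rule prob_le_1)
  qed
  have lim: "(\<lambda>M. measure (\<mu> M) (E1 M) + measure (\<mu> M) (E2 M) - 1) \<longlonglongrightarrow> 1"
    using tendsto_diff[OF tendsto_add[OF E1(2) E2(2)] tendsto_const[of 1]] by simp
  have "(\<lambda>M. measure (\<mu> M) (E1 M \<inter> E2 M)) \<longlonglongrightarrow> 1"
    by (rule tendsto_sandwich[OF _ _ lim tendsto_const]) (intro always_eventually allI lower upper)+
  moreover have "\<forall>\<^sub>F M in sequentially. \<forall>\<theta>\<in>E1 M \<inter> E2 M. P M \<theta> \<and> Q M \<theta>"
    using eventually_conj[OF E1(3) E2(3)] by (auto elim: eventually_mono)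
  ultimately show ?thesis
    unfolding whp_def using E1(1) E2(1) by (intro exI[of _ "\<lambda>M. E1 M \<inter> E2 M"]) auto
qed

lemma whp_mono:
  assumes "whp \<mu> P" and "\<forall>\<^sub>F M in sequentially. \<forall>\<theta>. P M \<theta> \<longrightarrow> Q M \<theta>"
  shows "whp \<mu> Q"
proof -
  obtain E where E: "\<forall>M. E M \<in> sets (\<mu> M)" "(\<lambda>M. measure (\<mu> M) (E M)) \<longlonglongrightarrow> 1"
    "\<forall>\<^sub>F M in sequentially. \<forall>\<theta>\<in>E M. P M \<theta>"
    using assms(1) unfolding whp_def by blast
  have "\<forall>\<^sub>F M in sequentially. \<forall>\<theta>\<in>E M. Q M \<theta>"
    using eventually_conj[OF E(3) assms(2)] by (auto elim: eventually_mono)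
  then show ?thesis unfolding whp_def using E by blast
qed

lemma eventually_div_sqrt_le:
  fixes c e :: real
  assumes "0 < e"
  shows "\<forall>\<^sub>F M in sequentially. 0 < M \<and> c / sqrt (real M) \<le> e"
proof -
  have "((\<lambda>M. c / sqrt (real M)) \<longlongrightarrow> 0) sequentially"
    by (intro tendsto_divide_0[OF tendsto_const] filterlim_at_top_imp_at_infinity
        filterlim_compose[OF sqrt_at_top filterlim_real_sequentially])
  then have "\<forall>\<^sub>F M in sequentially. c / sqrt (real M) < e"
    using assms by (rule order_tendstoD)
  then show ?thesis
    using eventually_gt_at_top[of 0] by eventually_elim auto
qed

section \<open>Derivatives along lines\<close>

text \<open>The parameter space 'p \<Rightarrow> real carries no norm, so differentiability is expressed along
  lines, with the gradient paired with the direction only over the finite coordinate set P.\<close>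

definition on_line :: "('p \<Rightarrow> real) \<Rightarrow> ('p \<Rightarrow> real) \<Rightarrow> real \<Rightarrow> 'p \<Rightarrow> real" where
  "on_line \<theta> v s = (\<lambda>p. \<theta> p + s * v p)"

definition gateaux_gradient ::
    "'p set \<Rightarrow> (('p \<Rightarrow> real) \<Rightarrow> real) \<Rightarrow> (('p \<Rightarrow> real) \<Rightarrow> 'p \<Rightarrow> real) \<Rightarrow> bool" where
  "gateaux_gradient P f Df \<longleftrightarrow>
     (\<forall>\<theta> v. ((\<lambda>s. f (on_line \<theta> v s)) has_real_derivative (\<Sum>p\<in>P. Df \<theta> p * v p)) (at 0))"

definition gateaux_differentiable :: "'p set \<Rightarrow> (('p \<Rightarrow> real) \<Rightarrow> real) \<Rightarrow> bool" where
  "gateaux_differentiable P f \<longleftrightarrow> (\<exists>Df. gateaux_gradient P f Df)"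

lemma on_line_0 [simp]: "on_line \<theta> v 0 = \<theta>"
  by (simp add: on_line_def)

lemma on_line_on_line: "on_line (on_line \<theta> v s) v h = on_line \<theta> v (h + s)"
  by (simp add: on_line_def fun_eq_iff algebra_simps)

lemma gateaux_differentiable_const: "gateaux_differentiable P (\<lambda>\<theta>. c)"
  unfolding gateaux_differentiable_def gateaux_gradient_def
  by (rule exI[of _ "\<lambda>\<theta> p. 0"]) simp

lemma gateaux_differentiable_coordinate:
  assumes "finite P" "q \<in> P"
  shows "gateaux_differentiable P (\<lambda>\<theta>. \<theta> q)"
  unfolding gateaux_differentiable_def gateaux_gradient_def
proof (intro exI[of _ "\<lambda>\<theta> p. of_bool (p = q)"] allI)
  fix \<theta> v :: "'a \<Rightarrow> real"
  have "((\<lambda>s. \<theta> q + s * v q) has_real_derivative v q) (at 0)"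
    by (auto intro!: derivative_eq_intros)
  then show "((\<lambda>s. on_line \<theta> v s q) has_real_derivative
      (\<Sum>p\<in>P. of_bool (p = q) * v p)) (at 0)"
    using assms by (simp add: on_line_def)
qed

lemma gateaux_differentiable_add:
  assumes "gateaux_differentiable P f" "gateaux_differentiable P g"
  shows "gateaux_differentiable P (\<lambda>\<theta>. f \<theta> + g \<theta>)"
proof -
  obtain Df Dg where "gateaux_gradient P f Df" "gateaux_gradient P g Dg"
    using assms unfolding gateaux_differentiable_def by blast
  then have "gateaux_gradient P (\<lambda>\<theta>. f \<theta> + g \<theta>) (\<lambda>\<theta> p. Df \<theta> p + Dg \<theta> p)"
    unfolding gateaux_gradient_def
    by (auto intro!: DERIV_add simp: distrib_right sum.distrib)
  then show ?thesis unfolding gateaux_differentiable_def by blast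
qed

lemma gateaux_differentiable_mult:
  assumes "gateaux_differentiable P f" "gateaux_differentiable P g"
  shows "gateaux_differentiable P (\<lambda>\<theta>. f \<theta> * g \<theta>)"
proof -
  obtain Df Dg where f: "gateaux_gradient P f Df" and g: "gateaux_gradient P g Dg"
    using assms unfolding gateaux_differentiable_def by blast
  have "gateaux_gradient P (\<lambda>\<theta>. f \<theta> * g \<theta>) (\<lambda>\<theta> p. Df \<theta> p * g \<theta> + f \<theta> * Dg \<theta> p)"
    unfolding gateaux_gradient_def
  proof (intro allI)
    fix \<theta> v
    have "((\<lambda>s. f (on_line \<theta> v s)) has_real_derivative (\<Sum>p\<in>P. Df \<theta> p * v p)) (at 0)"
      "((\<lambda>s. g (on_line \<theta> v s)) has_real_derivative (\<Sum>p\<in>P. Dg \<theta> p * v p)) (at 0)"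
      using f g unfolding gateaux_gradient_def by blast+
    from DERIV_mult'[OF this] show "((\<lambda>s. f (on_line \<theta> v s) * g (on_line \<theta> v s)) has_real_derivative
        (\<Sum>p\<in>P. (Df \<theta> p * g \<theta> + f \<theta> * Dg \<theta> p) * v p)) (at 0)"
      by (simp add: algebra_simps sum.distrib sum_distrib_left)
  qed
  then show ?thesis unfolding gateaux_differentiable_def by blast
qed

lemma gateaux_differentiable_comp:
  assumes "\<forall>x. \<phi> differentiable at x" "gateaux_differentiable P f"
  shows "gateaux_differentiable P (\<lambda>\<theta>. \<phi> (f \<theta>))"
proof -
  obtain Df where f: "gateaux_gradient P f Df"
    using assms unfolding gateaux_differentiable_def by blast
  have "gateaux_gradient P (\<lambda>\<theta>. \<phi> (f \<theta>)) (\<lambda>\<theta> p. deriv \<phi> (f \<theta>) * Df \<theta> p)"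
    unfolding gateaux_gradient_def
  proof (intro allI)
    fix \<theta> v
    have "(\<phi> has_real_derivative deriv \<phi> (f \<theta>)) (at ((\<lambda>s. f (on_line \<theta> v s)) 0))"
      using assms(1) by (simp add: DERIV_deriv_iff_real_differentiable)
    moreover have "((\<lambda>s. f (on_line \<theta> v s)) has_real_derivative (\<Sum>p\<in>P. Df \<theta> p * v p)) (at 0)"
      using f unfolding gateaux_gradient_def by blast
    ultimately have "((\<phi> \<circ> (\<lambda>s. f (on_line \<theta> v s))) has_real_derivative
        deriv \<phi> (f \<theta>) * (\<Sum>p\<in>P. Df \<theta> p * v p)) (at 0)"
      by (rule DERIV_chain)
    then show "((\<lambda>s. \<phi> (f (on_line \<theta> v s))) has_real_derivative
        (\<Sum>p\<in>P. deriv \<phi> (f \<theta>) * Df \<theta> p * v p)) (at 0)"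
      by (simp add: o_def sum_distrib_left mult_ac)
  qed
  then show ?thesis unfolding gateaux_differentiable_def by blast
qed

lemma gateaux_differentiable_sum:
  assumes "finite S" "\<And>j. j \<in> S \<Longrightarrow> gateaux_differentiable P (f j)"
  shows "gateaux_differentiable P (\<lambda>\<theta>. \<Sum>j\<in>S. f j \<theta>)"
  using assms
  by (induction S rule: finite_induct)
    (auto intro: gateaux_differentiable_add gateaux_differentiable_const)

lemma gateaux_gradient_diff_const:
  "gateaux_gradient P f Df \<Longrightarrow> gateaux_gradient P (\<lambda>\<theta>. f \<theta> - c) Df"
  unfolding gateaux_gradient_def by (auto intro: DERIV_diff[where E=0, simplified])

lemma gateaux_gradient_on_line:
  assumes "gateaux_gradient P f Df"
  shows "((\<lambda>s. f (on_line \<theta> v s)) has_real_derivative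
    (\<Sum>p\<in>P. Df (on_line \<theta> v s0) p * v p)) (at s0)"
proof -
  have "((\<lambda>h. f (on_line \<theta> v (h + s0))) has_real_derivative
      (\<Sum>p\<in>P. Df (on_line \<theta> v s0) p * v p)) (at 0)"
    using assms unfolding gateaux_gradient_def on_line_on_line[symmetric] by blast
  then show ?thesis
    using DERIV_shift[of "\<lambda>s. f (on_line \<theta> v s)" _ 0 s0] by simp
qed

lemma gateaux_gradient_jac:
  assumes "finite P" "gateaux_differentiable P (\<lambda>\<theta>. F \<theta> k)"
  shows "gateaux_gradient P (\<lambda>\<theta>. F \<theta> k) (\<lambda>\<theta>. jac F \<theta> k)"
proof -
  obtain Df where grad: "gateaux_gradient P (\<lambda>\<theta>. F \<theta> k) Df"
    using assms(2) unfolding gateaux_differentiable_def by blast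
  have partial: "jac F \<theta> k p = Df \<theta> p" if "p \<in> P" for \<theta> p
  proof -
    let ?e = "\<lambda>q. of_bool (q = p) :: real"
    have line: "on_line \<theta> ?e s = \<theta>(p := s + \<theta> p)" for s
      by (auto simp: on_line_def fun_eq_iff)
    have "(\<Sum>q\<in>P. Df \<theta> q * ?e q) = Df \<theta> p"
      using assms(1) that by simp
    moreover have "((\<lambda>s. F (on_line \<theta> ?e s) k) has_real_derivative (\<Sum>q\<in>P. Df \<theta> q * ?e q)) (at 0)"
      using grad unfolding gateaux_gradient_def by blast
    ultimately have "((\<lambda>s. F (\<theta>(p := s + \<theta> p)) k) has_real_derivative Df \<theta> p) (at 0)"
      unfolding line by simp
    then have "((\<lambda>s. F (\<theta>(p := s)) k) has_real_derivative Df \<theta> p) (at (0 + \<theta> p))"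
      using DERIV_shift[of "\<lambda>s. F (\<theta>(p := s)) k" _ 0 "\<theta> p"] by simp
    then show ?thesis
      unfolding jac_def by (intro DERIV_imp_deriv) simp
  qed
  have "(\<Sum>p\<in>P. jac F \<theta> k p * v p) = (\<Sum>p\<in>P. Df \<theta> p * v p)" for \<theta> v
    using partial by (intro sum.cong) auto
  then show ?thesis
    using grad unfolding gateaux_gradient_def by simp
qed

text \<open>The scalar mean value theorem applied to s \<mapsto> \<langle>e, f (on_line \<theta> v s)\<rangle>, where e is the
  vector on the left-hand side.\<close>

lemma vnorm_mean_value_le:
  assumes "finite K" and grad: "\<forall>k\<in>K. gateaux_gradient P (\<lambda>\<theta>. f \<theta> k) (\<lambda>\<theta>. J \<theta> k)"
  obtains \<xi> where "0 < \<xi>" "\<xi> < 1"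
    "vnorm K (\<lambda>k. f (on_line \<theta> v 1) k - f \<theta> k - z k)
       \<le> vnorm K (\<lambda>k. (\<Sum>p\<in>P. J (on_line \<theta> v \<xi>) k p * v p) - z k)"
proof -
  define e where "e k = f (on_line \<theta> v 1) k - f \<theta> k - z k" for k
  define \<psi> where "\<psi> s = (\<Sum>k\<in>K. e k * f (on_line \<theta> v s) k)" for s
  define \<psi>' where "\<psi>' s = (\<Sum>k\<in>K. e k * (\<Sum>p\<in>P. J (on_line \<theta> v s) k p * v p))" for s
  have "(\<psi> has_real_derivative \<psi>' s) (at s)" for s
    unfolding \<psi>_def \<psi>'_def using grad
    by (intro DERIV_sum DERIV_cmult) (auto intro: gateaux_gradient_on_line)
  then obtain \<xi> where \<xi>: "0 < \<xi>" "\<xi> < 1" "\<psi> 1 - \<psi> 0 = \<psi>' \<xi>"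
    using MVT2[of 0 1 \<psi> \<psi>'] by auto
  let ?w = "\<lambda>k. (\<Sum>p\<in>P. J (on_line \<theta> v \<xi>) k p * v p) - z k"
  have "(vnorm K e)\<^sup>2 = \<psi> 1 - \<psi> 0 - (\<Sum>k\<in>K. e k * z k)"
    unfolding vnorm_power2 \<psi>_def e_def
    by (simp add: algebra_simps sum_subtractf[symmetric])
  also have "\<dots> = (\<Sum>k\<in>K. e k * ?w k)"
    unfolding \<xi>(3) \<psi>'_def by (simp add: algebra_simps sum_subtractf)
  also have "\<dots> \<le> vnorm K e * vnorm K ?w"
    using abs_sum_mult_le_vnorm[of e ?w K] by linarith
  finally have "vnorm K e * vnorm K e \<le> vnorm K e * vnorm K ?w"
    by (simp add: power2_eq_square)
  then have "vnorm K e \<le> vnorm K ?w"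
    using vnorm_nonneg[of K e] vnorm_nonneg[of K ?w] by (auto simp: mult_le_cancel_left)
  with \<xi> that show ?thesis unfolding e_def by blast
qed

section \<open>Differentiability of the network\<close>

lemma finite_params: "finite (params L w)"
proof -
  have "params L w \<subseteq> (\<Union>l\<le>L. (\<lambda>(i, j). Wi l i j) ` ({..<w l} \<times> {..<w (l - 1)}) \<union> Bi l ` {..<w l})"
    unfolding params_def by auto
  then show ?thesis by (rule finite_subset) auto
qed

lemma gateaux_differentiable_preact:
  fixes h :: "(pidx \<Rightarrow> real) \<Rightarrow> nat \<Rightarrow> real"
  assumes "1 \<le> l" "l \<le> L" "i < w l"
    and "\<And>j. j < w (l - 1) \<Longrightarrow> gateaux_differentiable (params L w) (\<lambda>\<theta>. h \<theta> j)"
  shows "gateaux_differentiable (params L w) (\<lambda>\<theta>. preact \<phi> \<sigma>w \<sigma>b w \<theta> l (h \<theta>) i)"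
proof -
  have coordinate: "gateaux_differentiable (params L w) (\<lambda>\<theta>. \<theta> p)" if "p \<in> params L w" for p
    using finite_params that by (rule gateaux_differentiable_coordinate)
  have "gateaux_differentiable (params L w) (\<lambda>\<theta>. \<Sum>j<w (l - 1). \<theta> (Wi l i j) * h \<theta> j)"
    using assms
    by (intro gateaux_differentiable_sum gateaux_differentiable_mult coordinate)
      (auto simp: params_def)
  then show ?thesis
    unfolding preact_def using assms
    by (intro gateaux_differentiable_add gateaux_differentiable_mult
        gateaux_differentiable_const coordinate) (auto simp: params_def)
qed

lemma gateaux_differentiable_hidden:
  assumes "\<forall>x. \<phi> differentiable at x"
  shows "l < L \<Longrightarrow> i < w l \<Longrightarrow>
    gateaux_differentiable (params L w) (\<lambda>\<theta>. hidden \<phi> \<sigma>w \<sigma>b w \<theta> x l i)"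
proof (induction l arbitrary: i)
  case 0
  then show ?case by (simp add: gateaux_differentiable_const)
next
  case (Suc l)
  then have "gateaux_differentiable (params L w)
      (\<lambda>\<theta>. preact \<phi> \<sigma>w \<sigma>b w \<theta> (Suc l) (hidden \<phi> \<sigma>w \<sigma>b w \<theta> x l) i)"
    by (intro gateaux_differentiable_preact) auto
  then show ?case
    by (simp add: gateaux_differentiable_comp[OF assms])
qed

lemma gateaux_gradient_residual:
  assumes "\<forall>x. \<phi> differentiable at x" "1 \<le> L" "w L = C" "k \<in> outs N C"
  shows "gateaux_gradient (params L w) (\<lambda>\<theta>. fvec \<phi> \<sigma>w \<sigma>b w L xs \<theta> k - y k)
    (\<lambda>\<theta>. jac (fvec \<phi> \<sigma>w \<sigma>b w L xs) \<theta> k)"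
proof -
  obtain n c where k: "k = (n, c)" "c < w L"
    using assms(3,4) unfolding outs_def by auto
  have "gateaux_differentiable (params L w) (\<lambda>\<theta>. netout \<phi> \<sigma>w \<sigma>b w L \<theta> (xs n) c)"
    unfolding netout_def using assms(1,2) k
    by (intro gateaux_differentiable_preact gateaux_differentiable_hidden) auto
  then have "gateaux_differentiable (params L w) (\<lambda>\<theta>. fvec \<phi> \<sigma>w \<sigma>b w L xs \<theta> k)"
    by (simp add: fvec_def k)
  then show ?thesis
    by (intro gateaux_gradient_diff_const gateaux_gradient_jac finite_params)
qed

section \<open>Convergence of a single trajectory\<close>

lemma sum_gp_le:
  fixes \<rho> :: real
  assumes "0 \<le> \<rho>" "\<rho> < 1"
  shows "(\<Sum>j\<in>{1..t}. \<rho> ^ (j - 1)) \<le> 1 / (1 - \<rho>)"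
proof -
  have "(\<Sum>j\<in>{1..t}. \<rho> ^ (j - 1)) = (\<Sum>i<t. \<rho> ^ i)"
    using sum_bounds_lt_plus1[of "\<lambda>j. \<rho> ^ (j - 1)" t] by simp
  also have "\<dots> = (1 - \<rho> ^ t) / (1 - \<rho>)"
    using assms by (simp add: sum_gp_strict)
  also have "\<dots> \<le> 1 / (1 - \<rho>)"
    using assms by (intro divide_right_mono) auto
  finally show ?thesis .
qed

text \<open>The deterministic setting for one draw of the initialization \<Theta> 0: m plays the role
  of sqrt M, and Q \<theta> that of the matrix G(\<theta>)^-1 J(\<theta>)^T.\<close>

locale ngd_trajectory =
  fixes PI :: "'p set" and OI :: "'k set"
    and g :: "('p \<Rightarrow> real) \<Rightarrow> 'k \<Rightarrow> real"
    and J :: "('p \<Rightarrow> real) \<Rightarrow> 'k \<Rightarrow> 'p \<Rightarrow> real"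
    and Q :: "('p \<Rightarrow> real) \<Rightarrow> 'p \<Rightarrow> 'k \<Rightarrow> real"
    and \<Theta> :: "nat \<Rightarrow> 'p \<Rightarrow> real"
    and N :: nat and \<eta> \<alpha> K A D m :: real
  assumes finite_PI: "finite PI" and finite_OI: "finite OI"
    and gradient: "\<forall>k\<in>OI. gateaux_gradient PI (\<lambda>\<theta>. g \<theta> k) (\<lambda>\<theta>. J \<theta> k)"
    and \<Theta>_Suc: "\<And>t. \<Theta> (Suc t) = (\<lambda>p. \<Theta> t p - \<eta> * (\<Sum>k\<in>OI. Q (\<Theta> t) p k * g (\<Theta> t) k) / real N)"
    and jac_bounded: "frob OI PI (J (\<Theta> 0)) \<le> K"
    and jac_lipschitz: "\<And>\<theta>. vnorm PI (\<theta> - \<Theta> 0) < D \<Longrightarrow>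
      frob OI PI (\<lambda>k p. J \<theta> k p - J (\<Theta> 0) k p) \<le> K * vnorm PI (\<theta> - \<Theta> 0) / m"
    and isotropic: "\<And>k k'. k \<in> OI \<Longrightarrow> k' \<in> OI \<Longrightarrow>
      (\<Sum>p\<in>PI. J (\<Theta> 0) k p * Q (\<Theta> 0) p k') / real N = \<alpha> * (if k = k' then 1 else 0)"
    and precond_bounded: "\<And>\<theta>. vnorm PI (\<theta> - \<Theta> 0) < D \<Longrightarrow> \<eta> / real N * opnorm PI OI (Q \<theta>) \<le> A"
    and precond_lipschitz: "\<And>\<theta>. vnorm PI (\<theta> - \<Theta> 0) < D \<Longrightarrow>
      \<eta> / real N * opnorm PI OI (\<lambda>p k. Q (\<Theta> 0) p k - Q \<theta> p k) \<le> A * vnorm PI (\<theta> - \<Theta> 0) / m"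
    and positive: "0 < \<eta>" "0 < N" "0 \<le> K" "0 \<le> A" "0 < m"
begin

definition displacement :: "('p \<Rightarrow> real) \<Rightarrow> 'p \<Rightarrow> real" where
  "displacement \<theta> = (\<lambda>p. - (\<eta> / real N) * mvmul OI (Q \<theta>) (g \<theta>) p)"

definition correction :: "('p \<Rightarrow> real) \<Rightarrow> 'p \<Rightarrow> real" where
  "correction \<theta> = (\<lambda>p. \<eta> / real N * mvmul OI (\<lambda>p k. Q (\<Theta> 0) p k - Q \<theta> p k) (g \<theta>) p)"

lemma \<Theta>_Suc_on_line: "\<Theta> (Suc t) = on_line (\<Theta> t) (displacement (\<Theta> t)) 1"
  unfolding \<Theta>_Suc displacement_def on_line_def mvmul_def by (simp add: fun_eq_iff)

lemma vnorm_displacement_le: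
  assumes "vnorm PI (\<theta> - \<Theta> 0) < D"
  shows "vnorm PI (displacement \<theta>) \<le> A * vnorm OI (g \<theta>)"
proof -
  have "vnorm PI (displacement \<theta>) = \<eta> / real N * vnorm PI (mvmul OI (Q \<theta>) (g \<theta>))"
    unfolding displacement_def vnorm_mult using positive by simp
  also have "\<dots> \<le> \<eta> / real N * (opnorm PI OI (Q \<theta>) * vnorm OI (g \<theta>))"
    using positive by (intro mult_left_mono vnorm_mvmul_le_opnorm finite_OI) auto
  also have "\<dots> = (\<eta> / real N * opnorm PI OI (Q \<theta>)) * vnorm OI (g \<theta>)"
    by (simp only: mult.assoc)
  also have "\<dots> \<le> A * vnorm OI (g \<theta>)"
    by (rule mult_right_mono[OF precond_bounded[OF assms] vnorm_nonneg])
  finally show ?thesis .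
qed

lemma vnorm_correction_le:
  assumes "vnorm PI (\<theta> - \<Theta> 0) < D"
  shows "vnorm PI (correction \<theta>) \<le> A * vnorm PI (\<theta> - \<Theta> 0) / m * vnorm OI (g \<theta>)"
proof -
  let ?Q = "\<lambda>p k. Q (\<Theta> 0) p k - Q \<theta> p k"
  have "vnorm PI (correction \<theta>) = \<eta> / real N * vnorm PI (mvmul OI ?Q (g \<theta>))"
    unfolding correction_def vnorm_mult using positive by simp
  also have "\<dots> \<le> \<eta> / real N * (opnorm PI OI ?Q * vnorm OI (g \<theta>))"
    using positive by (intro mult_left_mono vnorm_mvmul_le_opnorm finite_OI) auto
  also have "\<dots> = (\<eta> / real N * opnorm PI OI ?Q) * vnorm OI (g \<theta>)"
    by (simp only: mult.assoc)
  also have "\<dots> \<le> A * vnorm PI (\<theta> - \<Theta> 0) / m * vnorm OI (g \<theta>)"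
    by (rule mult_right_mono[OF precond_lipschitz[OF assms] vnorm_nonneg])
  finally show ?thesis .
qed

lemma jac_displacement_eq:
  assumes "k \<in> OI"
  shows "(\<Sum>p\<in>PI. J (\<Theta> 0) k p * displacement \<theta> p)
    = mvmul PI (J (\<Theta> 0)) (correction \<theta>) k - \<eta> * \<alpha> * g \<theta> k"
proof -
  have JQ: "(\<Sum>p\<in>PI. J (\<Theta> 0) k p * Q (\<Theta> 0) p k') = real N * \<alpha> * (if k = k' then 1 else 0)"
    if "k' \<in> OI" for k'
    using isotropic[OF assms that] positive by (simp add: field_simps)
  have "displacement \<theta> p = correction \<theta> p - \<eta> / real N * (\<Sum>k'\<in>OI. Q (\<Theta> 0) p k' * g \<theta> k')" for p
    unfolding displacement_def correction_def mvmul_def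
    by (simp add: sum_subtractf algebra_simps)
  then have "(\<Sum>p\<in>PI. J (\<Theta> 0) k p * displacement \<theta> p) = mvmul PI (J (\<Theta> 0)) (correction \<theta>) k
      - \<eta> / real N * (\<Sum>k'\<in>OI. (\<Sum>p\<in>PI. J (\<Theta> 0) k p * Q (\<Theta> 0) p k') * g \<theta> k')"
    unfolding mvmul_def
    by (simp add: right_diff_distrib sum_subtractf sum_distrib_left sum_distrib_right
        mult_ac sum.swap[of _ OI PI])
  also have "(\<Sum>k'\<in>OI. (\<Sum>p\<in>PI. J (\<Theta> 0) k p * Q (\<Theta> 0) p k') * g \<theta> k')
      = (\<Sum>k'\<in>OI. if k = k' then real N * \<alpha> * g \<theta> k else 0)"
    using JQ by (intro sum.cong) auto
  also have "\<dots> = real N * \<alpha> * g \<theta> k"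
    using assms finite_OI by simp
  finally show ?thesis
    using positive by simp
qed

lemma linearization_error_le:
  assumes "vnorm PI (\<theta> - \<Theta> 0) \<le> D0" "vnorm PI (\<theta>' - \<Theta> 0) \<le> D0" "D0 < D"
  shows "vnorm OI (\<lambda>k. (\<Sum>p\<in>PI. J \<theta>' k p * displacement \<theta> p) + \<eta> * \<alpha> * g \<theta> k)
    \<le> 2 * K * A * D0 / m * vnorm OI (g \<theta>)"
proof -
  let ?dJ = "\<lambda>k p. J \<theta>' k p - J (\<Theta> 0) k p"
  have ball: "vnorm PI (\<theta> - \<Theta> 0) < D" "vnorm PI (\<theta>' - \<Theta> 0) < D"
    using assms by auto
  have "0 \<le> D0"
    using vnorm_nonneg assms(1) by (rule order.trans)
  have dJ: "frob OI PI ?dJ \<le> K * D0 / m"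
    using jac_lipschitz[OF ball(2)] assms(2) positive
    by (smt (verit) divide_right_mono mult_left_mono)
  have corr: "vnorm PI (correction \<theta>) \<le> A * D0 / m * vnorm OI (g \<theta>)"
    using vnorm_correction_le[OF ball(1)] assms(1) positive vnorm_nonneg[of OI "g \<theta>"]
    by (smt (verit) divide_right_mono mult_left_mono mult_right_mono)
  have "vnorm OI (\<lambda>k. (\<Sum>p\<in>PI. J \<theta>' k p * displacement \<theta> p) + \<eta> * \<alpha> * g \<theta> k)
      = vnorm OI (\<lambda>k. mvmul PI ?dJ (displacement \<theta>) k + mvmul PI (J (\<Theta> 0)) (correction \<theta>) k)"
    using jac_displacement_eq
    by (intro vnorm_cong) (simp add: mvmul_def left_diff_distrib sum_subtractf)
  also have "\<dots> \<le> frob OI PI ?dJ * vnorm PI (displacement \<theta>)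
      + frob OI PI (J (\<Theta> 0)) * vnorm PI (correction \<theta>)"
    by (intro order.trans[OF vnorm_add_le] add_mono vnorm_mvmul_le_frob)
  also have "\<dots> \<le> K * D0 / m * (A * vnorm OI (g \<theta>)) + K * (A * D0 / m * vnorm OI (g \<theta>))"
    using dJ corr jac_bounded vnorm_displacement_le[OF ball(1)] positive \<open>0 \<le> D0\<close>
      frob_nonneg vnorm_nonneg
    by (intro add_mono mult_mono) auto
  also have "\<dots> = 2 * K * A * D0 / m * vnorm OI (g \<theta>)"
    by (simp add: field_simps)
  finally show ?thesis .
qed

lemma vnorm_residual_step_le:
  assumes "vnorm PI (\<theta> - \<Theta> 0) + A * vnorm OI (g \<theta>) \<le> D0" "D0 < D"
  shows "vnorm OI (g (on_line \<theta> (displacement \<theta>) 1))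
    \<le> (\<bar>1 - \<eta> * \<alpha>\<bar> + 2 * K * A * D0 / m) * vnorm OI (g \<theta>)"
proof -
  let ?\<Delta> = "displacement \<theta>" and ?g1 = "g (on_line \<theta> (displacement \<theta>) 1)"
  have \<theta>_near: "vnorm PI (\<theta> - \<Theta> 0) \<le> D0"
    using assms(1) positive vnorm_nonneg[of OI "g \<theta>"] by (smt (verit) mult_nonneg_nonneg)
  have \<Delta>: "vnorm PI ?\<Delta> \<le> A * vnorm OI (g \<theta>)"
    using \<theta>_near assms(2) by (intro vnorm_displacement_le) auto
  obtain \<xi> where \<xi>: "0 < \<xi>" "\<xi> < 1"
    and mvt: "vnorm OI (\<lambda>k. ?g1 k - g \<theta> k - - (\<eta> * \<alpha> * g \<theta> k))
      \<le> vnorm OI (\<lambda>k. (\<Sum>p\<in>PI. J (on_line \<theta> ?\<Delta> \<xi>) k p * ?\<Delta> p) - - (\<eta> * \<alpha> * g \<theta> k))"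
    by (rule vnorm_mean_value_le[OF finite_OI gradient, where z = "\<lambda>k. - (\<eta> * \<alpha> * g \<theta> k)"])
  have "vnorm PI (on_line \<theta> ?\<Delta> \<xi> - \<Theta> 0) = vnorm PI (\<lambda>p. (\<theta> - \<Theta> 0) p + \<xi> * ?\<Delta> p)"
    by (intro vnorm_cong) (simp add: on_line_def)
  also have "\<dots> \<le> vnorm PI (\<theta> - \<Theta> 0) + \<xi> * vnorm PI ?\<Delta>"
    using vnorm_add_le[of PI "\<theta> - \<Theta> 0" "\<lambda>p. \<xi> * ?\<Delta> p"] \<xi>
    by (simp only: vnorm_mult abs_of_pos)
  also have "\<dots> \<le> D0"
    using \<xi> \<Delta> assms(1) vnorm_nonneg[of PI ?\<Delta>] by (smt (verit) mult_left_le_one_le)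
  finally have \<xi>_near: "vnorm PI (on_line \<theta> ?\<Delta> \<xi> - \<Theta> 0) \<le> D0" .
  have "vnorm OI (\<lambda>k. ?g1 k - (1 - \<eta> * \<alpha>) * g \<theta> k)
      = vnorm OI (\<lambda>k. ?g1 k - g \<theta> k - - (\<eta> * \<alpha> * g \<theta> k))"
    by (intro vnorm_cong) (simp add: algebra_simps)
  also note mvt
  also have "vnorm OI (\<lambda>k. (\<Sum>p\<in>PI. J (on_line \<theta> ?\<Delta> \<xi>) k p * ?\<Delta> p) - - (\<eta> * \<alpha> * g \<theta> k))
      \<le> 2 * K * A * D0 / m * vnorm OI (g \<theta>)"
    using linearization_error_le[OF \<theta>_near \<xi>_near assms(2)] by simp
  finally have err: "vnorm OI (\<lambda>k. ?g1 k - (1 - \<eta> * \<alpha>) * g \<theta> k)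
      \<le> 2 * K * A * D0 / m * vnorm OI (g \<theta>)" .
  have "vnorm OI ?g1 = vnorm OI (\<lambda>k. (?g1 k - (1 - \<eta> * \<alpha>) * g \<theta> k) + (1 - \<eta> * \<alpha>) * g \<theta> k)"
    by simp
  also have "\<dots> \<le> vnorm OI (\<lambda>k. ?g1 k - (1 - \<eta> * \<alpha>) * g \<theta> k) + \<bar>1 - \<eta> * \<alpha>\<bar> * vnorm OI (g \<theta>)"
    using vnorm_add_le[of OI "\<lambda>k. ?g1 k - (1 - \<eta> * \<alpha>) * g \<theta> k" "\<lambda>k. (1 - \<eta> * \<alpha>) * g \<theta> k"]
    by (simp only: vnorm_mult)
  also have "\<dots> \<le> (\<bar>1 - \<eta> * \<alpha>\<bar> + 2 * K * A * D0 / m) * vnorm OI (g \<theta>)"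
    using err by (simp add: distrib_right)
  finally show ?thesis .
qed

lemma trajectory_bounds:
  fixes R D0 :: real
  defines "\<rho> \<equiv> \<bar>1 - \<eta> * \<alpha>\<bar> + 2 * K * A * D0 / m"
  assumes g0: "vnorm OI (g (\<Theta> 0)) \<le> R" and "D0 < D"
    and path_bound: "\<And>t. A * R * (\<Sum>j\<in>{1..t}. \<rho> ^ (j - 1)) \<le> D0"
  shows "vnorm OI (g (\<Theta> t)) \<le> \<rho> ^ t * R
    \<and> (\<Sum>j\<in>{1..t}. vnorm PI (\<Theta> j - \<Theta> (j - 1))) \<le> A * R * (\<Sum>j\<in>{1..t}. \<rho> ^ (j - 1))"
proof -
  define S where "S t = (\<Sum>j\<in>{1..t}. vnorm PI (\<Theta> j - \<Theta> (j - 1)))" for t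
  define GS where "GS t = (\<Sum>j\<in>{1..t}. \<rho> ^ (j - 1))" for t
  have "0 \<le> D0"
    using path_bound[of 0] by simp
  then have "0 \<le> \<rho>"
    unfolding \<rho>_def using positive by simp
  have "vnorm OI (g (\<Theta> t)) \<le> \<rho> ^ t * R \<and> S t \<le> A * R * GS t \<and> vnorm PI (\<Theta> t - \<Theta> 0) \<le> S t"
  proof (induction t)
    case 0
    then show ?case
      using g0 by (simp add: S_def GS_def vnorm_def)
  next
    case (Suc t)
    let ?\<Delta> = "displacement (\<Theta> t)"
    have IH: "vnorm OI (g (\<Theta> t)) \<le> \<rho> ^ t * R" "S t \<le> A * R * GS t" "vnorm PI (\<Theta> t - \<Theta> 0) \<le> S t"
      using Suc.IH by blast+
    have gA: "A * vnorm OI (g (\<Theta> t)) \<le> A * (\<rho> ^ t * R)"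
      using IH(1) positive by (intro mult_left_mono) auto
    have near: "vnorm PI (\<Theta> t - \<Theta> 0) + A * vnorm OI (g (\<Theta> t)) \<le> D0"
    proof -
      have "vnorm PI (\<Theta> t - \<Theta> 0) + A * vnorm OI (g (\<Theta> t)) \<le> A * R * GS t + A * (\<rho> ^ t * R)"
        using IH gA by linarith
      also have "\<dots> = A * R * GS (Suc t)"
        by (simp add: GS_def algebra_simps)
      also have "\<dots> \<le> D0"
        unfolding GS_def by (rule path_bound)
      finally show ?thesis .
    qed
    then have "vnorm PI (\<Theta> t - \<Theta> 0) < D"
      using \<open>D0 < D\<close> positive vnorm_nonneg[of OI "g (\<Theta> t)"] by (smt (verit) mult_nonneg_nonneg)
    then have \<Delta>: "vnorm PI ?\<Delta> \<le> A * (\<rho> ^ t * R)"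
      using vnorm_displacement_le gA by (smt (verit))
    have "vnorm OI (g (\<Theta> (Suc t))) \<le> \<rho> * vnorm OI (g (\<Theta> t))"
      unfolding \<Theta>_Suc_on_line \<rho>_def by (rule vnorm_residual_step_le[OF near \<open>D0 < D\<close>])
    also have "\<dots> \<le> \<rho> ^ Suc t * R"
      using mult_left_mono[OF IH(1) \<open>0 \<le> \<rho>\<close>] by (simp add: mult.assoc)
    finally have g: "vnorm OI (g (\<Theta> (Suc t))) \<le> \<rho> ^ Suc t * R" .
    have step: "\<Theta> (Suc t) - \<Theta> t = ?\<Delta>"
      by (simp add: \<Theta>_Suc_on_line on_line_def fun_eq_iff)
    have "vnorm PI (\<Theta> (Suc t) - \<Theta> 0) = vnorm PI (\<lambda>p. (\<Theta> t - \<Theta> 0) p + ?\<Delta> p)"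
      by (intro vnorm_cong) (simp add: \<Theta>_Suc_on_line on_line_def)
    also have "\<dots> \<le> vnorm PI (\<Theta> t - \<Theta> 0) + vnorm PI ?\<Delta>"
      by (rule vnorm_add_le)
    finally have dist: "vnorm PI (\<Theta> (Suc t) - \<Theta> 0) \<le> S t + vnorm PI ?\<Delta>"
      using IH(3) by linarith
    have "S (Suc t) = S t + vnorm PI ?\<Delta>"
      by (simp add: S_def step)
    moreover have "A * R * GS (Suc t) = A * R * GS t + A * (\<rho> ^ t * R)"
      by (simp add: GS_def algebra_simps)
    ultimately show ?case
      using g dist \<Delta> IH(2) by linarith
  qed
  then show ?thesis
    unfolding S_def GS_def by blast
qed

lemma ngd_convergence:
  fixes R :: real
  defines "r \<equiv> \<bar>1 - \<eta> * \<alpha>\<bar>" and "A' \<equiv> 4 * K * A\<^sup>2 * R / (1 - \<bar>1 - \<eta> * \<alpha>\<bar>)"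
  assumes g0: "vnorm OI (g (\<Theta> 0)) \<le> R" and step_size: "0 < \<eta> * \<alpha>" "\<eta> * \<alpha> < 2"
    and radius: "2 * A * R / (1 - r) < D" and rate: "r + A' / m \<le> (1 + r) / 2"
  shows "vnorm OI (g (\<Theta> t)) \<le> (r + A' / m) ^ t * R
    \<and> (\<Sum>j\<in>{1..t}. vnorm PI (\<Theta> j - \<Theta> (j - 1))) \<le> A * R * (\<Sum>j\<in>{1..t}. (r + A' / m) ^ (j - 1))
    \<and> A * R * (\<Sum>j\<in>{1..t}. (r + A' / m) ^ (j - 1)) \<le> 2 * A * R / (1 - r)"
proof -
  define D0 where "D0 = 2 * A * R / (1 - r)"
  have r: "0 \<le> r" "r < 1"
    using step_size unfolding r_def by auto
  have "0 \<le> R"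
    using order.trans[OF vnorm_nonneg g0] .
  have rate_eq: "r + A' / m = \<bar>1 - \<eta> * \<alpha>\<bar> + 2 * K * A * D0 / m"
    unfolding A'_def D0_def r_def[symmetric] using r positive
    by (simp add: power2_eq_square field_simps)
  have "0 \<le> A' / m"
    unfolding A'_def r_def[symmetric] using r positive \<open>0 \<le> R\<close> by simp
  have path: "A * R * (\<Sum>j\<in>{1..t}. (r + A' / m) ^ (j - 1)) \<le> D0" for t
  proof -
    have half_gap: "(1 - r) / 2 \<le> 1 - (r + A' / m)"
      using rate unfolding add_divide_distrib diff_divide_distrib by linarith
    have "0 \<le> r + A' / m" "r + A' / m < 1"
      using r \<open>0 \<le> A' / m\<close> half_gap by (simp, smt (verit) half_gt_zero)
    then have "(\<Sum>j\<in>{1..t}. (r + A' / m) ^ (j - 1)) \<le> 1 / (1 - (r + A' / m))"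
      by (rule sum_gp_le)
    also have "\<dots> \<le> 1 / ((1 - r) / 2)"
      using r half_gap by (intro frac_le) auto
    also have "\<dots> = 2 / (1 - r)"
      by simp
    finally have "A * R * (\<Sum>j\<in>{1..t}. (r + A' / m) ^ (j - 1)) \<le> A * R * (2 / (1 - r))"
      using positive \<open>0 \<le> R\<close> by (intro mult_left_mono) auto
    then show ?thesis
      unfolding D0_def by (simp add: mult.commute mult.left_commute)
  qed
  have "vnorm OI (g (\<Theta> t)) \<le> (r + A' / m) ^ t * R
    \<and> (\<Sum>j\<in>{1..t}. vnorm PI (\<Theta> j - \<Theta> (j - 1))) \<le> A * R * (\<Sum>j\<in>{1..t}. (r + A' / m) ^ (j - 1))"
    unfolding rate_eq by (rule trajectory_bounds[OF g0 radius[folded D0_def] path[unfolded rate_eq]])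
  then show ?thesis
    using path[of t] unfolding D0_def by blast
qed

end

theorem theoremA2:
  fixes \<phi> :: "real \<Rightarrow> real" and \<sigma>w \<sigma>b :: real
    and L C N M0 :: nat and \<alpha>w :: "nat \<Rightarrow> real"
    and xs :: "nat \<Rightarrow> nat \<Rightarrow> real" and y :: "nat \<times> nat \<Rightarrow> real"
    and G :: "nat \<Rightarrow> (pidx \<Rightarrow> real) \<Rightarrow> pidx \<Rightarrow> pidx \<Rightarrow> real"
    and \<eta> \<alpha> K R0 A :: real
  defines "PI \<equiv> \<lambda>M. params L (width M0 C L \<alpha>w M)"
    and "OI \<equiv> outs N C"
    and "F \<equiv> \<lambda>M. fvec \<phi> \<sigma>w \<sigma>b (width M0 C L \<alpha>w M) L xs"
    and "g \<equiv> \<lambda>M \<theta> k. fvec \<phi> \<sigma>w \<sigma>b (width M0 C L \<alpha>w M) L xs \<theta> k - y k"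
    and "J \<equiv> \<lambda>M \<theta>. jac (fvec \<phi> \<sigma>w \<sigma>b (width M0 C L \<alpha>w M) L xs) \<theta>"
    and "Q \<equiv> \<lambda>M \<theta>. ginvJT (params L (width M0 C L \<alpha>w M)) (outs N C) (G M \<theta>) (jac (fvec \<phi> \<sigma>w \<sigma>b (width M0 C L \<alpha>w M) L xs) \<theta>)"
    and "\<mu> \<equiv> \<lambda>M. init_law (params L (width M0 C L \<alpha>w M))"
    and "\<Theta> \<equiv> \<lambda>M \<theta>0. ngd (params L (width M0 C L \<alpha>w M)) (outs N C) N \<eta> (fvec \<phi> \<sigma>w \<sigma>b (width M0 C L \<alpha>w M) L xs)
                (\<lambda>\<theta> k. fvec \<phi> \<sigma>w \<sigma>b (width M0 C L \<alpha>w M) L xs \<theta> k - y k) (G M) \<theta>0"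
    and "r \<equiv> \<bar>1 - \<eta> * \<alpha>\<bar>"
    and "A' \<equiv> 4 * K * A\<^sup>2 * R0 / (1 - \<bar>1 - \<eta> * \<alpha>\<bar>)"
  assumes L: "L \<ge> 1" and C: "C \<ge> 1" and N: "N \<ge> 1"
    and widths: "\<forall>l. 1 \<le> l \<and> l < L \<longrightarrow> \<alpha>w l > 0"
    and act: "activation_ok \<phi>"
    and data_norm: "\<forall>n<N. vnorm {..<M0} (xs n) = 1"
    and data_distinct: "\<forall>n<N. \<forall>n'<N. n \<noteq> n' \<longrightarrow> (\<exists>j<M0. xs n j \<noteq> xs n' j)"
    and K_pos: "K > 0"
    and K_bound: "\<forall>D>0. whp \<mu> (\<lambda>M \<theta>0. \<forall>\<theta>1 \<theta>2.
         vnorm (PI M) (\<theta>1 - \<theta>0) < D \<and> vnorm (PI M) (\<theta>2 - \<theta>0) < D \<longrightarrow>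
         frob OI (PI M) (J M \<theta>1) \<le> K \<and>
         frob OI (PI M) (\<lambda>k p. J M \<theta>1 k p - J M \<theta>2 k p)
           \<le> K * vnorm (PI M) (\<theta>1 - \<theta>2) / sqrt (real M))"
    and R0_pos: "R0 > 0"
    and R0_bound: "whp \<mu> (\<lambda>M \<theta>0. vnorm OI (g M \<theta>0) < R0)"
    and cond1_pos: "\<alpha> > 0"
    and cond1: "whp \<mu> (\<lambda>M \<theta>0. \<forall>k\<in>OI. \<forall>k'\<in>OI.
         (\<Sum>p\<in>PI M. J M \<theta>0 k p * Q M \<theta>0 p k') / real N = \<alpha> * (if k = k' then 1 else 0))"
    and cond2_pos: "A > 0"
    and cond2: "\<forall>D>0. whp \<mu> (\<lambda>M \<theta>0. \<forall>\<theta>s. vnorm (PI M) (\<theta>s - \<theta>0) < D \<longrightarrow>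
         \<eta> / real N * opnorm (PI M) OI (Q M \<theta>s) \<le> A \<and>
         \<eta> / real N * opnorm (PI M) OI (\<lambda>p k. Q M \<theta>0 p k - Q M \<theta>s p k)
           \<le> A * vnorm (PI M) (\<theta>s - \<theta>0) / sqrt (real M))"
    and step: "0 < \<eta> * \<alpha>" "\<eta> * \<alpha> < 2"
  shows "whp \<mu> (\<lambda>M \<theta>0. \<forall>t.
           vnorm OI (g M (\<Theta> M \<theta>0 t)) \<le> (r + A' / sqrt (real M)) ^ t * R0 \<and>
           (\<Sum>j\<in>{1..t}. vnorm (PI M) (\<Theta> M \<theta>0 j - \<Theta> M \<theta>0 (j - 1)))
             \<le> A * R0 * (\<Sum>j\<in>{1..t}. (r + A' / sqrt (real M)) ^ (j - 1)) \<and>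
           A * R0 * (\<Sum>j\<in>{1..t}. (r + A' / sqrt (real M)) ^ (j - 1)) \<le> 2 * A * R0 / (1 - r))"
proof -
  have r: "r < 1"
    using step unfolding r_def by auto
  define D where "D = 2 * A * R0 / (1 - r) + 1"
  have "0 < D"
    unfolding D_def using r cond2_pos R0_pos by (simp add: add_nonneg_pos)
  have prob: "\<And>M. prob_space (\<mu> M)"
    unfolding \<mu>_def by (rule prob_space_init_law)
  note events = whp_conjI[OF prob whp_conjI[OF prob K_bound[rule_format, OF \<open>0 < D\<close>]
      cond2[rule_format, OF \<open>0 < D\<close>]] whp_conjI[OF prob R0_bound cond1]]
  have large: "\<forall>\<^sub>F M in sequentially. 0 < M \<and> A' / sqrt (real M) \<le> (1 - r) / 2"
    using r by (intro eventually_div_sqrt_le) simp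
  show ?thesis
  proof (rule whp_mono[OF events], rule eventually_mono[OF large], intro allI impI, goal_cases)
    case (1 M \<theta>0)
    have \<Theta>0: "\<Theta> M \<theta>0 0 = \<theta>0"
      unfolding \<Theta>_def by simp
    have near0: "vnorm (PI M) (\<theta>0 - \<theta>0) < D"
      using \<open>0 < D\<close> by (simp add: vnorm_def)
    interpret ngd_trajectory "PI M" OI "g M" "J M" "Q M" "\<Theta> M \<theta>0" N \<eta> \<alpha> K A D "sqrt (real M)"
    proof unfold_locales
      show "finite (PI M)" "finite OI"
        unfolding PI_def OI_def outs_def by (simp_all add: finite_params)
      show "\<forall>k\<in>OI. gateaux_gradient (PI M) (\<lambda>\<theta>. g M \<theta> k) (\<lambda>\<theta>. J M \<theta> k)"
        unfolding PI_def OI_def g_def J_def using act L unfolding activation_ok_def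
        by (auto intro!: gateaux_gradient_residual simp: width_def)
      show "\<And>t. \<Theta> M \<theta>0 (Suc t) = (\<lambda>p. \<Theta> M \<theta>0 t p
          - \<eta> * (\<Sum>k\<in>OI. Q M (\<Theta> M \<theta>0 t) p k * g M (\<Theta> M \<theta>0 t) k) / real N)"
        unfolding \<Theta>_def Q_def g_def OI_def by (simp add: Let_def)
      show "0 < \<eta>" "0 < N" "0 \<le> K" "0 \<le> A" "0 < sqrt (real M)"
        using step cond1_pos N K_pos cond2_pos 1(1) by (auto simp: zero_less_mult_iff)
    qed (insert 1(2) near0, unfold \<Theta>0, blast+)
    have "r + A' / sqrt (real M) \<le> (1 + r) / 2"
      using 1(1) unfolding add_divide_distrib diff_divide_distrib by linarith
    then show ?case
      using ngd_convergence[of R0] 1(2) step \<Theta>0 unfolding D_def r_def A'_def by auto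
  qed
qed

end
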